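(* Let $(G,\cdot)$ be a group of nilpotence class (at most) two. For $n\in\mathbb{Z}$ define $g\circ_n h=g\cdot g^{n}\cdot h\cdot g^{-n}$, which equals $g\cdot h\cdot[g,h]^{n}$. Then $(\circ_n: n\in\mathbb{Z})$ is a brace block on $G$.
   Context: Commutator convention: $[x,y]=x y x^{-1}y^{-1}$ (so that $g^n h g^{-n}=h[h^{-1},g^n]$). A skew brace is a triple $(G,\cdot,\circ)$ where $(G,\cdot)$ and $(G,\circ)$ are groups and $g\circ(h\cdot k)=(g\circ h)\cdot g^{-1}\cdot(g\circ k)$ for all $g,h,k$. A bi-skew brace is a triple $(G,\cdot,\circ)$ such that both $(G,\cdot,\circ)$ and $(G,\circ,\cdot)$ are skew braces. A brace block on a set $G$ is a family $\mathcal{F}$ of group operations on $G$ such that $(G,\circ,\diamond)$ is a bi-skew brace for all $\circ,\diamond\in\mathcal{F}$. *)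

theory Defs
  imports "HOL-Algebra.Group"
begin

definition grp :: "'a set \<Rightarrow> ('a \<Rightarrow> 'a \<Rightarrow> 'a) \<Rightarrow> 'a monoid" where
  "grp S f = \<lparr>carrier = S, mult = f,
     one = (THE e. e \<in> S \<and> (\<forall>x\<in>S. f e x = x \<and> f x e = x))\<rparr>"

definition group_op :: "'a set \<Rightarrow> ('a \<Rightarrow> 'a \<Rightarrow> 'a) \<Rightarrow> bool" where
  "group_op S f \<longleftrightarrow> group (grp S f)"

definition skew_brace :: "'a set \<Rightarrow> ('a \<Rightarrow> 'a \<Rightarrow> 'a) \<Rightarrow> ('a \<Rightarrow> 'a \<Rightarrow> 'a) \<Rightarrow> bool" where
  "skew_brace S dot circ \<longleftrightarrow> group_op S dot \<and> group_op S circ \<and>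
     (\<forall>g\<in>S. \<forall>h\<in>S. \<forall>k\<in>S.
        circ g (dot h k) = dot (dot (circ g h) (inv\<^bsub>grp S dot\<^esub> g)) (circ g k))"

definition bi_skew_brace :: "'a set \<Rightarrow> ('a \<Rightarrow> 'a \<Rightarrow> 'a) \<Rightarrow> ('a \<Rightarrow> 'a \<Rightarrow> 'a) \<Rightarrow> bool" where
  "bi_skew_brace S dot circ \<longleftrightarrow> skew_brace S dot circ \<and> skew_brace S circ dot"

definition brace_block :: "'a set \<Rightarrow> ('a \<Rightarrow> 'a \<Rightarrow> 'a) set \<Rightarrow> bool" where
  "brace_block S F \<longleftrightarrow> (\<forall>f\<in>F. \<forall>f'\<in>F. bi_skew_brace S f f')"

definition commutator :: "('a, 'b) monoid_scheme \<Rightarrow> 'a \<Rightarrow> 'a \<Rightarrow> 'a" where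
  "commutator G x y = x \<otimes>\<^bsub>G\<^esub> y \<otimes>\<^bsub>G\<^esub> inv\<^bsub>G\<^esub> x \<otimes>\<^bsub>G\<^esub> inv\<^bsub>G\<^esub> y"

definition nilpotent_class_le_2 :: "('a, 'b) monoid_scheme \<Rightarrow> bool" where
  "nilpotent_class_le_2 G \<longleftrightarrow> (\<forall>x\<in>carrier G. \<forall>y\<in>carrier G. \<forall>z\<in>carrier G.
      commutator G x y \<otimes>\<^bsub>G\<^esub> z = z \<otimes>\<^bsub>G\<^esub> commutator G x y)"

definition circ_n :: "('a, 'b) monoid_scheme \<Rightarrow> int \<Rightarrow> 'a \<Rightarrow> 'a \<Rightarrow> 'a" where
  "circ_n G n g h = g \<otimes>\<^bsub>G\<^esub> (g [^]\<^bsub>G\<^esub> n) \<otimes>\<^bsub>G\<^esub> h \<otimes>\<^bsub>G\<^esub> (g [^]\<^bsub>G\<^esub> (- n))"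

end

theory Submission
  imports Defs
begin

text \<open>
  In a group of nilpotency class two the commutator is a bimultiplicative, alternating map into
  the centre that vanishes on central arguments, hence so is its \<open>n\<close>-th power \<open>\<beta>\<^sub>n\<close>, and
  \<open>g \<circ>\<^sub>n h = g h \<beta>\<^sub>n(g, h)\<close>. For any such map \<open>\<beta>\<close> the twisted product
  \<open>g h \<beta>(g, h)\<close> is a group law with the same unit and inverses, and central factors can be pulled
  out of either argument. For two such maps \<open>\<beta>\<close>, \<open>\<gamma>\<close>, pulling out all central factors turns
  both sides of the skew brace identity into \<open>g h k\<close> times the same product of values of \<open>\<beta>\<close>
  and \<open>\<gamma>\<close>, by bimultiplicativity and \<open>\<beta>(h, g) \<beta>(h, g\<^sup>-\<^sup>1) = 1\<close>.
\<close>

lemma carrier_grp [simp]: "carrier (grp S f) = S"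
  by (simp add: grp_def)

lemma mult_grp [simp]: "mult (grp S f) = f"
  by (simp add: grp_def)

lemma one_grp_eq:
  assumes "e \<in> S" "\<And>x. x \<in> S \<Longrightarrow> f e x = x" "\<And>x. x \<in> S \<Longrightarrow> f x e = x"
  shows "one (grp S f) = e"
  unfolding grp_def
proof (simp, rule the_equality)
  fix e' assume "e' \<in> S \<and> (\<forall>x\<in>S. f e' x = x \<and> f x e' = x)"
  then have "f e' e = e" "f e' e = e'"
    using assms by auto
  then show "e' = e" by simp
qed (use assms in auto)

lemma group_opI:
  assumes closed: "\<And>x y. x \<in> S \<Longrightarrow> y \<in> S \<Longrightarrow> f x y \<in> S"
    and assoc: "\<And>x y z. x \<in> S \<Longrightarrow> y \<in> S \<Longrightarrow> z \<in> S \<Longrightarrow> f (f x y) z = f x (f y z)"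
    and unit: "e \<in> S" "\<And>x. x \<in> S \<Longrightarrow> f e x = x" "\<And>x. x \<in> S \<Longrightarrow> f x e = x"
    and inverse: "\<And>x. x \<in> S \<Longrightarrow> i x \<in> S" "\<And>x. x \<in> S \<Longrightarrow> f (i x) x = e"
  shows "group_op S f"
  unfolding group_op_def
proof (rule groupI)
  have one: "one (grp S f) = e"
    using unit by (rule one_grp_eq)
  show "\<exists>y\<in>carrier (grp S f). y \<otimes>\<^bsub>grp S f\<^esub> x = \<one>\<^bsub>grp S f\<^esub>" if "x \<in> carrier (grp S f)" for x
    using that inverse by (auto simp: one)
qed (use closed assoc unit one_grp_eq[OF unit] in auto)

lemma inv_grp_eq:
  assumes "group_op S f" "x \<in> S" "y \<in> S" "f y x = one (grp S f)"
  shows "inv\<^bsub>grp S f\<^esub> x = y"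
  using assms group.inv_equality[of "grp S f" y x] by (simp add: group_op_def)

definition (in monoid) central :: "'a \<Rightarrow> bool" where
  "central z \<longleftrightarrow> z \<in> carrier G \<and> (\<forall>x\<in>carrier G. z \<otimes> x = x \<otimes> z)"

context group
begin

lemma inv_mult_cancel_left: "x \<in> carrier G \<Longrightarrow> y \<in> carrier G \<Longrightarrow> inv x \<otimes> (x \<otimes> y) = y"
  by (simp flip: m_assoc)

lemma mult_inv_cancel_left: "x \<in> carrier G \<Longrightarrow> y \<in> carrier G \<Longrightarrow> x \<otimes> (inv x \<otimes> y) = y"
  by (simp flip: m_assoc)

lemma central_closed: "central z \<Longrightarrow> z \<in> carrier G"
  by (simp add: central_def)

lemma central_commute: "central z \<Longrightarrow> x \<in> carrier G \<Longrightarrow> x \<otimes> z = z \<otimes> x"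
  by (simp add: central_def)

lemma central_left_commute:
  assumes "central z" "x \<in> carrier G" "y \<in> carrier G"
  shows "x \<otimes> (z \<otimes> y) = z \<otimes> (x \<otimes> y)"
proof -
  have "x \<otimes> z = z \<otimes> x"
    using assms(1,2) by (rule central_commute)
  then show ?thesis
    using assms by (simp add: central_closed flip: m_assoc)
qed

lemma central_one [simp]: "central \<one>"
  by (simp add: central_def)

lemma central_inv [simp]:
  assumes "central a"
  shows "central (inv a)"
  unfolding central_def
proof (intro conjI ballI)
  fix x assume x: "x \<in> carrier G"
  have a: "a \<in> carrier G"
    using assms by (rule central_closed)
  have "inv a \<otimes> x = inv a \<otimes> (x \<otimes> a) \<otimes> inv a"
    using a x by (simp add: m_assoc)
  also have "\<dots> = inv a \<otimes> (a \<otimes> x) \<otimes> inv a"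
    using assms x by (simp add: central_commute)
  also have "\<dots> = x \<otimes> inv a"
    using a x by (simp flip: m_assoc)
  finally show "inv a \<otimes> x = x \<otimes> inv a" .
qed (use assms in \<open>simp add: central_closed\<close>)

lemma central_int_pow [simp]:
  assumes "central a"
  shows "central (a [^] (n::int))"
proof -
  have "central (a [^] (m::nat))" for m
    unfolding central_def
  proof (intro conjI ballI)
    fix x assume "x \<in> carrier G"
    then show "a [^] m \<otimes> x = x \<otimes> a [^] m"
      using assms by (intro group_commutes_pow) (simp_all add: central_closed central_commute)
  qed (use assms in \<open>simp add: central_closed\<close>)
  then show ?thesis
    unfolding int_pow_def2 by (simp del: pow_nat)
qed

lemma int_pow_central_mult_distrib:
  "central a \<Longrightarrow> central b \<Longrightarrow> (a \<otimes> b) [^] (n::int) = a [^] n \<otimes> b [^] n"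
  by (rule int_pow_mult_distrib) (simp_all add: central_closed central_commute[of b a])

lemma central_mult_commute: "central a \<Longrightarrow> central b \<Longrightarrow> a \<otimes> b = b \<otimes> a"
  by (simp add: central_commute central_closed)

lemma central_mult_left_commute:
  "central a \<Longrightarrow> central b \<Longrightarrow> c \<in> carrier G \<Longrightarrow> a \<otimes> (b \<otimes> c) = b \<otimes> (a \<otimes> c)"
  by (simp add: central_left_commute central_closed)

lemma central_mult_inv_cancel:
  assumes "central a" "b \<in> carrier G"
  shows "a \<otimes> (b \<otimes> inv a) = b"
proof -
  have "a \<otimes> (b \<otimes> inv a) = b \<otimes> (a \<otimes> inv a)"
    using assms by (intro central_left_commute[symmetric]) (simp_all add: central_closed)
  then show ?thesis
    using assms by (simp add: central_closed)
qed

text \<open>Permutative rules that only ever swap two central factors: ordered rewriting sorts each run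
  of central factors and leaves every non-central factor in place.\<close>

lemmas central_ac = m_assoc central_mult_commute central_mult_left_commute

end

locale alternating_central_pairing = group G for G (structure) and \<beta> +
  assumes pairing_central [simp]: "x \<in> carrier G \<Longrightarrow> y \<in> carrier G \<Longrightarrow> central (\<beta> x y)"
    and pairing_mult_left:
      "x \<in> carrier G \<Longrightarrow> y \<in> carrier G \<Longrightarrow> z \<in> carrier G \<Longrightarrow> \<beta> (x \<otimes> y) z = \<beta> x z \<otimes> \<beta> y z"
    and pairing_mult_right:
      "x \<in> carrier G \<Longrightarrow> y \<in> carrier G \<Longrightarrow> z \<in> carrier G \<Longrightarrow> \<beta> x (y \<otimes> z) = \<beta> x y \<otimes> \<beta> x z"
    and pairing_self [simp]: "x \<in> carrier G \<Longrightarrow> \<beta> x x = \<one>"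
    and pairing_central_left [simp]: "central z \<Longrightarrow> y \<in> carrier G \<Longrightarrow> \<beta> z y = \<one>"

definition twisted_mult :: "('a, 'b) monoid_scheme \<Rightarrow> ('a \<Rightarrow> 'a \<Rightarrow> 'a) \<Rightarrow> 'a \<Rightarrow> 'a \<Rightarrow> 'a" where
  "twisted_mult G \<beta> g h = g \<otimes>\<^bsub>G\<^esub> h \<otimes>\<^bsub>G\<^esub> \<beta> g h"

context alternating_central_pairing
begin

lemma pairing_closed [simp]: "x \<in> carrier G \<Longrightarrow> y \<in> carrier G \<Longrightarrow> \<beta> x y \<in> carrier G"
  by (simp add: central_closed)

lemma pairing_inv_left:
  assumes "x \<in> carrier G" "y \<in> carrier G"
  shows "\<beta> (inv x) y = inv (\<beta> x y)"
proof -
  have "\<beta> (inv x) y \<otimes> \<beta> x y = \<one>"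
    using pairing_mult_left[of "inv x" x y] assms by simp
  then show ?thesis
    using assms by (intro inv_equality[symmetric]) simp_all
qed

lemma pairing_antisym:
  assumes "x \<in> carrier G" "y \<in> carrier G"
  shows "\<beta> y x = inv (\<beta> x y)"
proof -
  have "\<beta> x y \<otimes> \<beta> y x = \<beta> x (x \<otimes> y) \<otimes> \<beta> y (x \<otimes> y)"
    using assms by (simp add: pairing_mult_right)
  also have "\<dots> = \<one>"
    using assms by (simp flip: pairing_mult_left)
  finally have "\<beta> y x \<otimes> \<beta> x y = \<one>"
    by (rule inv_comm) (simp_all add: assms)
  then show ?thesis
    using assms by (intro inv_equality[symmetric]) simp_all
qed

lemma pairing_inv_right:
  "x \<in> carrier G \<Longrightarrow> y \<in> carrier G \<Longrightarrow> \<beta> x (inv y) = inv (\<beta> x y)"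
  by (simp add: pairing_antisym[of "inv y" x] pairing_antisym[of x y] pairing_inv_left)

lemma pairing_central_right [simp]: "central z \<Longrightarrow> x \<in> carrier G \<Longrightarrow> \<beta> x z = \<one>"
  by (simp add: pairing_antisym[of z x] central_closed)

lemma pairing_conj_left:
  assumes "g \<in> carrier G" "h \<in> carrier G" "x \<in> carrier G"
  shows "\<beta> (g \<otimes> h \<otimes> inv g) x = \<beta> h x"
  using assms by (simp add: pairing_mult_left pairing_inv_left central_ac central_mult_inv_cancel)

lemma twisted_mult_closed [simp]:
  "g \<in> carrier G \<Longrightarrow> h \<in> carrier G \<Longrightarrow> twisted_mult G \<beta> g h \<in> carrier G"
  by (simp add: twisted_mult_def)

lemma twisted_mult_central_left:
  assumes "central z" "x \<in> carrier G" "y \<in> carrier G"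
  shows "twisted_mult G \<beta> (x \<otimes> z) y = twisted_mult G \<beta> x y \<otimes> z"
proof -
  have "twisted_mult G \<beta> (x \<otimes> z) y = x \<otimes> (z \<otimes> (y \<otimes> \<beta> x y))"
    using assms by (simp add: twisted_mult_def pairing_mult_left central_closed m_assoc)
  also have "\<dots> = x \<otimes> (y \<otimes> \<beta> x y \<otimes> z)"
    using assms by (simp add: central_commute)
  finally show ?thesis
    using assms by (simp add: twisted_mult_def central_closed m_assoc)
qed

lemma twisted_mult_central_right:
  assumes "central z" "x \<in> carrier G" "y \<in> carrier G"
  shows "twisted_mult G \<beta> x (y \<otimes> z) = twisted_mult G \<beta> x y \<otimes> z"
  using assms by (simp add: twisted_mult_def pairing_mult_right central_closed central_ac)

lemma twisted_mult_assoc: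
  assumes "g \<in> carrier G" "h \<in> carrier G" "k \<in> carrier G"
  shows "twisted_mult G \<beta> (twisted_mult G \<beta> g h) k = twisted_mult G \<beta> g (twisted_mult G \<beta> h k)"
proof -
  have "twisted_mult G \<beta> (twisted_mult G \<beta> g h) k = twisted_mult G \<beta> (g \<otimes> h) k \<otimes> \<beta> g h"
    using assms by (simp add: twisted_mult_def[of G \<beta> g h] twisted_mult_central_left)
  moreover have "twisted_mult G \<beta> g (twisted_mult G \<beta> h k) = twisted_mult G \<beta> g (h \<otimes> k) \<otimes> \<beta> h k"
    using assms by (simp add: twisted_mult_def[of G \<beta> h k] twisted_mult_central_right)
  ultimately show ?thesis
    using assms by (simp add: twisted_mult_def pairing_mult_left pairing_mult_right central_ac)
qed

lemma twisted_mult_one_left [simp]: "x \<in> carrier G \<Longrightarrow> twisted_mult G \<beta> \<one> x = x"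
  by (simp add: twisted_mult_def)

lemma twisted_mult_one_right [simp]: "x \<in> carrier G \<Longrightarrow> twisted_mult G \<beta> x \<one> = x"
  by (simp add: twisted_mult_def)

lemma twisted_mult_inv_left [simp]: "x \<in> carrier G \<Longrightarrow> twisted_mult G \<beta> (inv x) x = \<one>"
  by (simp add: twisted_mult_def pairing_inv_left)

lemma
  assumes "\<And>g h. g \<in> carrier G \<Longrightarrow> h \<in> carrier G \<Longrightarrow> f g h = twisted_mult G \<beta> g h"
  shows group_op_twisted_mult: "group_op (carrier G) f"
    and inv_grp_twisted_mult: "g \<in> carrier G \<Longrightarrow> inv\<^bsub>grp (carrier G) f\<^esub> g = inv g"
proof -
  show group: "group_op (carrier G) f"
    by (rule group_opI[where e = "\<one>" and i = "m_inv G"]) (simp_all add: assms twisted_mult_assoc)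
  have one: "one (grp (carrier G) f) = \<one>"
    by (rule one_grp_eq) (simp_all add: assms)
  show "inv\<^bsub>grp (carrier G) f\<^esub> g = inv g" if "g \<in> carrier G"
    using that by (intro inv_grp_eq[OF group]) (simp_all add: assms one)
qed

lemma twisted_mult_skew_brace_identity:
  assumes "alternating_central_pairing G \<gamma>" "g \<in> carrier G" "h \<in> carrier G" "k \<in> carrier G"
  shows "twisted_mult G \<gamma> g (twisted_mult G \<beta> h k) =
    twisted_mult G \<beta> (twisted_mult G \<beta> (twisted_mult G \<gamma> g h) (inv g)) (twisted_mult G \<gamma> g k)"
proof -
  interpret \<gamma>: alternating_central_pairing G \<gamma>
    by (fact assms(1))
  note carrier = assms(2-4)
  define u where "u = g \<otimes> h \<otimes> inv g"
  define d where "d = inv (\<beta> h g)"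
  have u: "u \<in> carrier G" and d: "central d"
    using carrier by (simp_all add: u_def d_def)
  have "twisted_mult G \<beta> (twisted_mult G \<gamma> g h) (inv g) = twisted_mult G \<beta> (g \<otimes> h) (inv g) \<otimes> \<gamma> g h"
    using carrier by (simp add: twisted_mult_def[of G \<gamma>] twisted_mult_central_left)
  also have "\<dots> = u \<otimes> d \<otimes> \<gamma> g h"
    using carrier by (simp add: u_def d_def twisted_mult_def pairing_mult_left pairing_inv_right)
  finally have inner: "twisted_mult G \<beta> (twisted_mult G \<gamma> g h) (inv g) = u \<otimes> d \<otimes> \<gamma> g h" .
  have "u \<otimes> (g \<otimes> k) = g \<otimes> h \<otimes> k"
    using carrier by (simp add: u_def m_assoc inv_mult_cancel_left)
  moreover have "\<beta> u (g \<otimes> k) = \<beta> h g \<otimes> \<beta> h k"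
    using carrier by (simp add: u_def pairing_conj_left pairing_mult_right)
  ultimately have "twisted_mult G \<beta> u (g \<otimes> k) = g \<otimes> h \<otimes> k \<otimes> (\<beta> h g \<otimes> \<beta> h k)"
    by (simp add: twisted_mult_def)
  moreover have "\<beta> h g \<otimes> \<beta> h k \<otimes> d = \<beta> h k"
    using carrier by (simp add: d_def m_assoc central_mult_inv_cancel)
  ultimately have "twisted_mult G \<beta> u (g \<otimes> k) \<otimes> d = g \<otimes> h \<otimes> k \<otimes> \<beta> h k"
    using carrier central_closed[OF d] by (simp add: m_assoc)
  then have outer: "twisted_mult G \<beta> (u \<otimes> d \<otimes> \<gamma> g h) (twisted_mult G \<gamma> g k) =
      g \<otimes> h \<otimes> k \<otimes> \<beta> h k \<otimes> \<gamma> g h \<otimes> \<gamma> g k"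
    using carrier u d central_closed[OF d] by (simp add: twisted_mult_def[of G \<gamma>] twisted_mult_central_left
        twisted_mult_central_right)
  have "twisted_mult G \<gamma> g (twisted_mult G \<beta> h k) = twisted_mult G \<gamma> g (h \<otimes> k) \<otimes> \<beta> h k"
    using carrier by (simp add: twisted_mult_def[of G \<beta>] \<gamma>.twisted_mult_central_right)
  also have "\<dots> = g \<otimes> h \<otimes> k \<otimes> \<beta> h k \<otimes> \<gamma> g h \<otimes> \<gamma> g k"
    using carrier by (simp add: twisted_mult_def \<gamma>.pairing_mult_right central_ac)
  finally show ?thesis
    by (simp only: inner outer)
qed

lemma skew_brace_twisted_mult:
  assumes \<gamma>: "alternating_central_pairing G \<gamma>"
    and f: "\<And>g h. g \<in> carrier G \<Longrightarrow> h \<in> carrier G \<Longrightarrow> f g h = twisted_mult G \<beta> g h"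
    and f': "\<And>g h. g \<in> carrier G \<Longrightarrow> h \<in> carrier G \<Longrightarrow> f' g h = twisted_mult G \<gamma> g h"
  shows "skew_brace (carrier G) f f'"
  unfolding skew_brace_def
proof (intro conjI ballI)
  show "group_op (carrier G) f"
    using f by (rule group_op_twisted_mult)
  show "group_op (carrier G) f'"
    using f' by (rule alternating_central_pairing.group_op_twisted_mult[OF \<gamma>])
  fix g h k assume "g \<in> carrier G" "h \<in> carrier G" "k \<in> carrier G"
  then show "f' g (f h k) = f (f (f' g h) (inv\<^bsub>grp (carrier G) f\<^esub> g)) (f' g k)"
    using \<gamma> by (simp add: f f' inv_grp_twisted_mult[OF f] alternating_central_pairing.twisted_mult_closed
        twisted_mult_skew_brace_identity)
qed

lemma pairing_nat_pow_left:
  assumes "x \<in> carrier G" "y \<in> carrier G"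
  shows "\<beta> (x [^] (n::nat)) y = \<beta> x y [^] n"
  using assms by (induction n) (simp_all add: pairing_mult_left)

lemma pairing_int_pow_left:
  assumes "x \<in> carrier G" "y \<in> carrier G"
  shows "\<beta> (x [^] (n::int)) y = \<beta> x y [^] n"
  using assms by (simp add: int_pow_def2 pairing_nat_pow_left pairing_inv_left del: pow_nat)

lemma int_pow_alternating_central_pairing:
  "alternating_central_pairing G (\<lambda>x y. \<beta> x y [^] (n::int))"
  by unfold_locales
    (simp_all add: pairing_mult_left pairing_mult_right int_pow_central_mult_distrib)

end

context group
begin

lemma commutator_closed [simp]:
  "x \<in> carrier G \<Longrightarrow> y \<in> carrier G \<Longrightarrow> commutator G x y \<in> carrier G"
  by (simp add: commutator_def)

lemma commutator_self [simp]: "x \<in> carrier G \<Longrightarrow> commutator G x x = \<one>"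
  by (simp add: commutator_def m_assoc mult_inv_cancel_left)

lemma commutator_antisym:
  assumes "x \<in> carrier G" "y \<in> carrier G"
  shows "commutator G y x = inv (commutator G x y)"
  using assms by (intro inv_equality[symmetric])
    (simp_all add: commutator_def m_assoc mult_inv_cancel_left inv_mult_cancel_left)

lemma commutator_alternating_central_pairing:
  assumes "nilpotent_class_le_2 G"
  shows "alternating_central_pairing G (commutator G)"
proof -
  have central: "central (commutator G x y)" if "x \<in> carrier G" "y \<in> carrier G" for x y
    using assms that by (simp add: central_def nilpotent_class_le_2_def commutator_def)
  have mult_left: "commutator G (x \<otimes> y) z = commutator G x z \<otimes> commutator G y z"
    if "x \<in> carrier G" "y \<in> carrier G" "z \<in> carrier G" for x y z
  proof -
    have "y \<otimes> z \<otimes> inv y = commutator G y z \<otimes> z"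
      using that by (simp add: commutator_def m_assoc)
    then have "commutator G (x \<otimes> y) z = x \<otimes> (commutator G y z \<otimes> z) \<otimes> inv x \<otimes> inv z"
      using that by (simp add: commutator_def m_assoc inv_mult_group)
    also have "\<dots> = commutator G y z \<otimes> (x \<otimes> z \<otimes> inv x \<otimes> inv z)"
      using that central[of y z] central_closed[OF central[of y z]]
      by (simp add: m_assoc central_left_commute[of "commutator G y z" x])
    also have "\<dots> = commutator G y z \<otimes> commutator G x z"
      by (simp add: commutator_def)
    finally show ?thesis
      using that central by (simp add: central_mult_commute)
  qed
  show ?thesis
  proof
    fix x y z assume xyz: "x \<in> carrier G" "y \<in> carrier G" "z \<in> carrier G"
    have "commutator G x (y \<otimes> z) = inv (commutator G y x \<otimes> commutator G z x)"
      using xyz by (simp add: commutator_antisym[of "y \<otimes> z" x] mult_left)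
    also have "\<dots> = commutator G x z \<otimes> commutator G x y"
      using xyz by (simp add: inv_mult_group commutator_antisym[of x])
    finally show "commutator G x (y \<otimes> z) = commutator G x y \<otimes> commutator G x z"
      using xyz central by (simp add: central_mult_commute)
  next
    fix z y assume "central z" "y \<in> carrier G"
    then show "commutator G z y = \<one>"
      by (simp add: commutator_def central_closed m_assoc central_left_commute[of z y, symmetric]
          mult_inv_cancel_left)
  qed (simp_all add: central mult_left commutator_self)
qed

lemma circ_n_eq_twisted_mult:
  assumes "nilpotent_class_le_2 G" "g \<in> carrier G" "h \<in> carrier G"
  shows "circ_n G n g h = twisted_mult G (\<lambda>x y. commutator G x y [^] n) g h"
proof -
  interpret commutator: alternating_central_pairing G "commutator G"
    using assms(1) by (rule commutator_alternating_central_pairing)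
  define p where "p = g [^] n"
  have p: "p \<in> carrier G"
    using assms by (simp add: p_def)
  have "circ_n G n g h = g \<otimes> (commutator G p h \<otimes> h)"
    using assms p by (simp add: circ_n_def p_def int_pow_neg commutator_def m_assoc)
  also have "\<dots> = g \<otimes> h \<otimes> commutator G p h"
    using assms p by (simp add: m_assoc central_commute[of "commutator G p h" h])
  finally show ?thesis
    using assms by (simp add: twisted_mult_def p_def commutator.pairing_int_pow_left)
qed

end

theorem mainTheorem8:
  fixes G :: "('a, 'b) monoid_scheme"
  assumes "group G"
    and "nilpotent_class_le_2 G"
  shows "brace_block (carrier G) (range (circ_n G))"
proof -
  interpret group G by fact
  interpret commutator: alternating_central_pairing G "commutator G"
    using assms(2) by (rule commutator_alternating_central_pairing)
  have "skew_brace (carrier G) (circ_n G m) (circ_n G n)" for m n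
  proof -
    interpret m: alternating_central_pairing G "\<lambda>x y. commutator G x y [^]\<^bsub>G\<^esub> m"
      by (rule commutator.int_pow_alternating_central_pairing)
    show ?thesis
      by (rule m.skew_brace_twisted_mult[OF commutator.int_pow_alternating_central_pairing])
        (simp_all add: circ_n_eq_twisted_mult assms(2))
  qed
  then show ?thesis
    unfolding brace_block_def bi_skew_brace_def by blast
qed

end
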